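(* Let $\nu\in\mathbb{N}$, let $(X,d)$ be a complete $\nu$-generalized metric space, and let $T:X\to X$ be a Ćirić–Matkowski contraction. Then $T$ has a unique fixed point $z$, and for every $x\in X$ the sequence $\{T^nx\}$ converges to $z$ in the strong sense.
   Context: Let $X$ be a nonempty set, $d:X\times X\to[0,\infty)$, and $\nu\in\mathbb{N}$. $(X,d)$ is a $\nu$-generalized metric space if: (1) $d(x,y)=0$ iff $x=y$; (2) $d(x,y)=d(y,x)$ for all $x,y$; (3) $d(x,y)\le d(x,u_1)+d(u_1,u_2)+\dots+d(u_\nu,y)$ for every set $\{x,u_1,\dots,u_\nu,y\}$ of $\nu+2$ pairwise distinct elements of $X$. A sequence $\{x_n\}$ in $X$ is Cauchy if $\lim_{n\to\infty}\sup\{d(x_n,x_{n+1+m}): m\in\mathbb{Z}^+\}=0$ ($\mathbb{Z}^+$ the nonnegative integers). $\{x_n\}$ converges to $x$ if $d(x,x_n)\to0$; it converges to $x$ in the strong sense if it is Cauchy and converges to $x$. $X$ is complete if every Cauchy sequence in $X$ converges. A map $T:X\to X$ is a Ćirić–Matkowski contraction if $d(Tx,Ty)<d(x,y)$ for all $x\ne y$ in $X$, and for every $\epsilon>0$ there exists $\delta>0$ such that for all $x,y\in X$, $d(x,y)<\delta+\epsilon$ implies $d(Tx,Ty)\le\epsilon$. *)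

theory Defs
  imports "HOL-Analysis.Analysis"
begin

text \<open>Condition (3) is stated for every list [x, u_1, ..., u_nu, y] of nu+2 pairwise
  distinct elements of X: d(x,y) is at most the sum of consecutive distances.\<close>
definition nu_gen_metric :: "nat \<Rightarrow> 'a set \<Rightarrow> ('a \<Rightarrow> 'a \<Rightarrow> real) \<Rightarrow> bool" where
  "nu_gen_metric \<nu> X d \<longleftrightarrow>
     X \<noteq> {} \<and>
     (\<forall>x\<in>X. \<forall>y\<in>X. d x y \<ge> 0) \<and>
     (\<forall>x\<in>X. \<forall>y\<in>X. d x y = 0 \<longleftrightarrow> x = y) \<and>
     (\<forall>x\<in>X. \<forall>y\<in>X. d x y = d y x) \<and>
     (\<forall>us. length us = \<nu> + 2 \<and> distinct us \<and> set us \<subseteq> X \<longrightarrow>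
        d (hd us) (last us) \<le> (\<Sum>i<\<nu>+1. d (us ! i) (us ! Suc i)))"

text \<open>Cauchy: lim_n sup_{m>=0} d(x_n, x_{n+1+m}) = 0, written with bounded suprema
  (the supremum over m is eventually finite and tends to 0).\<close>
definition gm_cauchy :: "('a \<Rightarrow> 'a \<Rightarrow> real) \<Rightarrow> (nat \<Rightarrow> 'a) \<Rightarrow> bool" where
  "gm_cauchy d x \<longleftrightarrow>
     (\<forall>\<^sub>F n in sequentially. bdd_above (range (\<lambda>m. d (x n) (x (n + 1 + m))))) \<and>
     ((\<lambda>n. SUP m. d (x n) (x (n + 1 + m))) \<longlonglongrightarrow> 0)"

definition gm_converges :: "('a \<Rightarrow> 'a \<Rightarrow> real) \<Rightarrow> (nat \<Rightarrow> 'a) \<Rightarrow> 'a \<Rightarrow> bool" where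
  "gm_converges d x z \<longleftrightarrow> ((\<lambda>n. d z (x n)) \<longlonglongrightarrow> 0)"

definition gm_converges_strong :: "('a \<Rightarrow> 'a \<Rightarrow> real) \<Rightarrow> (nat \<Rightarrow> 'a) \<Rightarrow> 'a \<Rightarrow> bool" where
  "gm_converges_strong d x z \<longleftrightarrow> gm_cauchy d x \<and> gm_converges d x z"

definition gm_complete :: "'a set \<Rightarrow> ('a \<Rightarrow> 'a \<Rightarrow> real) \<Rightarrow> bool" where
  "gm_complete X d \<longleftrightarrow>
     (\<forall>x. range x \<subseteq> X \<and> gm_cauchy d x \<longrightarrow> (\<exists>z\<in>X. gm_converges d x z))"

definition ciric_matkowski :: "'a set \<Rightarrow> ('a \<Rightarrow> 'a \<Rightarrow> real) \<Rightarrow> ('a \<Rightarrow> 'a) \<Rightarrow> bool" where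
  "ciric_matkowski X d T \<longleftrightarrow>
     (\<forall>x\<in>X. \<forall>y\<in>X. x \<noteq> y \<longrightarrow> d (T x) (T y) < d x y) \<and>
     (\<forall>\<epsilon>>0. \<exists>\<delta>>0. \<forall>x\<in>X. \<forall>y\<in>X. d x y < \<delta> + \<epsilon> \<longrightarrow> d (T x) (T y) \<le> \<epsilon>)"

end

theory Submission
  imports Defs
begin

text \<open>
  Either some Picard iterate is a fixed point, or the orbit x_n = T^n x is injective. In the
  injective case each gap d(x_n, x_(n+j)) decreases strictly in n, and the Matkowski condition
  forces its limit to be 0. The Cauchy property then follows from the polygon inequality along
  x_n, x_(n+1), x_(k+1), ..., x_(k+nu): by induction, d(x_n, x_k) < delta + e gives
  d(x_(n+1), x_(k+1)) <= e, and the remaining nu edges are tiny. Limits need not be unique in a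
  nu-generalized metric space, but they are for injective sequences with vanishing consecutive
  distances, by a polygon through both candidate limits; since d(T z, x_(n+1)) <= d(z, x_n), the
  limit z is fixed.
\<close>

lemma gm_cauchyI:
  fixes d :: "'a \<Rightarrow> 'a \<Rightarrow> real"
  assumes nonneg: "\<And>n m. 0 \<le> d (s n) (s m)"
    and small: "\<And>\<epsilon>. \<epsilon> > 0 \<Longrightarrow> \<exists>N. \<forall>n\<ge>N. \<forall>m>n. d (s n) (s m) < \<epsilon>"
  shows "gm_cauchy d s"
proof -
  let ?D = "\<lambda>n. range (\<lambda>m. d (s n) (s (n + 1 + m)))"
  have sup_small: "\<forall>\<^sub>F n in sequentially. bdd_above (?D n) \<and> 0 \<le> Sup (?D n) \<and> Sup (?D n) \<le> \<epsilon>"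
    if \<epsilon>: "\<epsilon> > 0" for \<epsilon>
  proof -
    obtain N where N: "\<forall>n\<ge>N. \<forall>m>n. d (s n) (s m) < \<epsilon>" using small[OF \<epsilon>] by blast
    have "bdd_above (?D n) \<and> 0 \<le> Sup (?D n) \<and> Sup (?D n) \<le> \<epsilon>" if "n \<ge> N" for n
    proof -
      have le: "d (s n) (s (n + 1 + m)) \<le> \<epsilon>" for m
        using N that by (simp add: less_imp_le)
      then have bdd: "bdd_above (?D n)" by (rule bdd_aboveI2)
      show ?thesis
        using bdd cSUP_upper2[OF bdd UNIV_I nonneg] le by (auto intro: cSUP_least)
    qed
    then show ?thesis unfolding eventually_sequentially by blast
  qed
  show ?thesis
    unfolding gm_cauchy_def
  proof
    show "\<forall>\<^sub>F n in sequentially. bdd_above (?D n)"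
      using sup_small[of 1] by (auto elim: eventually_mono)
    show "(\<lambda>n. Sup (?D n)) \<longlonglongrightarrow> 0"
    proof (rule order_tendstoI)
      fix a :: real
      assume "a < 0"
      then show "\<forall>\<^sub>F n in sequentially. a < Sup (?D n)"
        using sup_small[of 1] by (auto elim: eventually_mono)
    next
      fix a :: real
      assume "0 < a"
      then show "\<forall>\<^sub>F n in sequentially. Sup (?D n) < a"
        using sup_small[of "a / 2"] by (auto elim: eventually_mono)
    qed
  qed
qed

lemma eventually_ne_injective:
  assumes "inj s"
  shows "\<forall>\<^sub>F n in sequentially. s n \<noteq> c"
proof -
  have "finite (s -` {c})" using assms by (simp add: finite_vimageI)
  then show ?thesis
    by (simp add: cofinite_eq_sequentially[symmetric] eventually_cofinite vimage_def)
qed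

locale nu_generalized_metric_space =
  fixes \<nu> :: nat and X :: "'a set" and d :: "'a \<Rightarrow> 'a \<Rightarrow> real"
  assumes nu_gen_metric: "nu_gen_metric \<nu> X d" and nu_pos: "1 \<le> \<nu>"
begin

lemma dist_nonneg: "x \<in> X \<Longrightarrow> y \<in> X \<Longrightarrow> 0 \<le> d x y"
  using nu_gen_metric unfolding nu_gen_metric_def by auto

lemma dist_eq_0_iff: "x \<in> X \<Longrightarrow> y \<in> X \<Longrightarrow> d x y = 0 \<longleftrightarrow> x = y"
  using nu_gen_metric unfolding nu_gen_metric_def by blast

lemma dist_commute: "x \<in> X \<Longrightarrow> y \<in> X \<Longrightarrow> d x y = d y x"
  using nu_gen_metric unfolding nu_gen_metric_def by blast

lemma nonempty: "X \<noteq> {}"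
  using nu_gen_metric unfolding nu_gen_metric_def by (elim conjE)

lemma dist_self: "x \<in> X \<Longrightarrow> d x x = 0"
  using dist_eq_0_iff by blast

lemma polygon_inequality:
  assumes "inj_on p {..Suc \<nu>}" and "p ` {..Suc \<nu>} \<subseteq> X"
  shows "d (p 0) (p (Suc \<nu>)) \<le> (\<Sum>i<Suc \<nu>. d (p i) (p (Suc i)))"
proof -
  define us where "us = map p [0..<\<nu> + 2]"
  have indices: "set [0..<\<nu> + 2] = {..Suc \<nu>}" by auto
  have us: "length us = \<nu> + 2" "distinct us" "set us \<subseteq> X"
    using assms unfolding us_def distinct_map set_map indices by simp_all
  have nth_us: "us ! i = p i" if "i \<le> Suc \<nu>" for i
    using that by (simp add: us_def del: upt_Suc)
  have "d (hd us) (last us) \<le> (\<Sum>i<\<nu> + 1. d (us ! i) (us ! Suc i))"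
    using nu_gen_metric us unfolding nu_gen_metric_def by (elim conjE) simp
  moreover have "hd us = p 0" "last us = p (Suc \<nu>)"
    using us(1) nth_us[of 0] nth_us[of "Suc \<nu>"]
    by (simp_all add: hd_conv_nth last_conv_nth length_0_conv[symmetric])
  moreover have "(\<Sum>i<\<nu> + 1. d (us ! i) (us ! Suc i)) = (\<Sum>i<Suc \<nu>. d (p i) (p (Suc i)))"
    by (rule sum.cong) (simp_all add: nth_us)
  ultimately show ?thesis by simp
qed

lemma polygon_inequality_seq:
  assumes inj: "inj s" and s: "range s \<subseteq> X" and "n < k"
  shows "d (s n) (s (k + \<nu>)) \<le> d (s n) (s (Suc n)) + d (s (Suc n)) (s (Suc k))
           + (\<Sum>i<\<nu> - 1. d (s (Suc k + i)) (s (Suc (Suc k + i))))"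
proof -
  obtain \<mu> where \<mu>: "\<nu> = Suc \<mu>" using nu_pos by (cases \<nu>) auto
  define q where "q i = (if i = 0 then n else if i = 1 then Suc n else k + i - 1)" for i
  have "inj_on q {..Suc \<nu>}"
    using \<open>n < k\<close> by (auto simp: inj_on_def q_def split: if_splits)
  then have "inj_on (s \<circ> q) {..Suc \<nu>}"
    using inj by (simp add: comp_inj_on inj_on_subset)
  moreover have "(s \<circ> q) ` {..Suc \<nu>} \<subseteq> X" using s by auto
  ultimately have "d (s (q 0)) (s (q (Suc \<nu>))) \<le> (\<Sum>i<Suc \<nu>. d (s (q i)) (s (q (Suc i))))"
    using polygon_inequality by fastforce
  moreover have "(\<Sum>i<Suc \<nu>. d (s (q i)) (s (q (Suc i)))) = d (s n) (s (Suc n))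
      + d (s (Suc n)) (s (Suc k)) + (\<Sum>i<\<nu> - 1. d (s (Suc k + i)) (s (Suc (Suc k + i))))"
    unfolding \<mu> by (simp only: sum.lessThan_Suc_shift) (simp add: q_def)
  ultimately show ?thesis using \<mu> by (simp add: q_def)
qed

text \<open>Injectivity lets the polygon inequality run through \<open>z, s (n + 1), \<dots>, s (n + \<nu>), w\<close>.\<close>

lemma limit_unique_injective:
  assumes inj: "inj s" and s: "range s \<subseteq> X"
    and steps: "(\<lambda>n. d (s n) (s (Suc n))) \<longlonglongrightarrow> 0"
    and z: "z \<in> X" "(\<lambda>n. d z (s n)) \<longlonglongrightarrow> 0"
    and w: "w \<in> X" "(\<lambda>n. d w (s n)) \<longlonglongrightarrow> 0"
  shows "z = w"
proof (rule ccontr)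
  assume "z \<noteq> w"
  obtain N where N: "\<And>n. n \<ge> N \<Longrightarrow> s n \<noteq> z \<and> s n \<noteq> w"
    using eventually_conj[OF eventually_ne_injective[OF inj] eventually_ne_injective[OF inj]]
    unfolding eventually_sequentially by blast
  define P where "P n i = (if i = 0 then z else if i = Suc \<nu> then w else s (n + i))" for n i
  have "d z w \<le> (\<Sum>i<Suc \<nu>. d (P n i) (P n (Suc i)))" if "n \<ge> N" for n
  proof -
    have "\<forall>m. s (n + m) \<noteq> z \<and> s (n + m) \<noteq> w" using N that by simp
    then have "inj_on (P n) {..Suc \<nu>}"
      using \<open>z \<noteq> w\<close> by (auto simp: inj_on_def P_def inj_eq[OF inj])
    moreover have "P n ` {..Suc \<nu>} \<subseteq> X" using s z w by (auto simp: P_def)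
    ultimately show ?thesis using polygon_inequality by (fastforce simp: P_def)
  qed
  moreover have "(\<lambda>n. \<Sum>i<Suc \<nu>. d (P n i) (P n (Suc i))) \<longlonglongrightarrow> 0"
  proof (rule tendsto_null_sum)
    fix i assume "i \<in> {..<Suc \<nu>}"
    then have "i \<le> \<nu>" by simp
    then consider "i = 0" | "i = \<nu>" "i \<noteq> 0" | "0 < i" "i < \<nu>" by linarith
    then show "(\<lambda>n. d (P n i) (P n (Suc i))) \<longlonglongrightarrow> 0"
    proof cases
      case 1
      then show ?thesis using LIMSEQ_Suc[OF z(2)] nu_pos by (simp add: P_def)
    next
      case 2
      have "(\<lambda>n. d w (s (n + \<nu>))) \<longlonglongrightarrow> 0"
        using LIMSEQ_ignore_initial_segment[OF w(2)] .
      then show ?thesis using 2 s w by (simp add: P_def dist_commute range_subsetD)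
    next
      case 3
      then show ?thesis
        using LIMSEQ_ignore_initial_segment[OF steps, of i] by (simp add: P_def add.commute)
    qed
  qed
  ultimately have "d z w \<le> 0" by (intro LIMSEQ_le_const) auto
  then show False using dist_nonneg dist_eq_0_iff z w \<open>z \<noteq> w\<close> by force
qed

end

locale ciric_matkowski_contraction = nu_generalized_metric_space +
  fixes T :: "'a \<Rightarrow> 'a"
  assumes maps_into: "T ` X \<subseteq> X" and ciric_matkowski: "ciric_matkowski X d T"
begin

lemma iterate_in: "x \<in> X \<Longrightarrow> (T ^^ n) x \<in> X"
  using maps_into by (induction n) auto

lemma dist_image_less: "x \<in> X \<Longrightarrow> y \<in> X \<Longrightarrow> x \<noteq> y \<Longrightarrow> d (T x) (T y) < d x y"
  using ciric_matkowski unfolding ciric_matkowski_def by blast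

lemma dist_image_le: "x \<in> X \<Longrightarrow> y \<in> X \<Longrightarrow> d (T x) (T y) \<le> d x y"
  using dist_image_less[of x y] dist_self maps_into by (cases "x = y") auto

lemma ciric_matkowski_delta:
  "\<epsilon> > 0 \<Longrightarrow> \<exists>\<delta>>0. \<forall>x\<in>X. \<forall>y\<in>X. d x y < \<delta> + \<epsilon> \<longrightarrow> d (T x) (T y) \<le> \<epsilon>"
  using ciric_matkowski unfolding ciric_matkowski_def by blast

lemma fixed_point_unique: "z \<in> X \<Longrightarrow> w \<in> X \<Longrightarrow> T z = z \<Longrightarrow> T w = w \<Longrightarrow> z = w"
  using dist_image_less[of z w] by auto

lemma inj_orbit:
  assumes x: "x \<in> X" and no_fixed: "\<And>n. T ((T ^^ n) x) \<noteq> (T ^^ n) x"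
  shows "inj (\<lambda>n. (T ^^ n) x)"
proof (rule linorder_injI)
  define a where "a n = d ((T ^^ n) x) ((T ^^ Suc n) x)" for n
  have "- a n < - a (Suc n)" for n
    using dist_image_less[of "(T ^^ n) x" "(T ^^ Suc n) x"] no_fixed[of n]
      iterate_in[OF x, of n] iterate_in[OF x, of "Suc n"]
    by (simp add: a_def)
  then have decreasing: "m < n \<Longrightarrow> a n < a m" for m n
    using lift_Suc_mono_less[of "\<lambda>n. - a n"] by force
  fix m n :: nat
  assume "m < n"
  then show "(T ^^ m) x \<noteq> (T ^^ n) x"
    using decreasing[of m n] by (auto simp: a_def)
qed

lemma orbit_dist_tendsto_0:
  assumes x: "x \<in> X" and inj: "inj (\<lambda>n. (T ^^ n) x)" and "1 \<le> j"
  shows "(\<lambda>n. d ((T ^^ n) x) ((T ^^ (n + j)) x)) \<longlonglongrightarrow> 0"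
proof -
  define b where "b n = d ((T ^^ n) x) ((T ^^ (n + j)) x)" for n
  have decreasing: "b (Suc n) < b n" for n
    using dist_image_less[OF iterate_in[OF x] iterate_in[OF x]] inj_eq[OF inj, of n "n + j"]
      \<open>1 \<le> j\<close>
    by (simp add: b_def)
  have nonneg: "0 \<le> b n" for n
    using dist_nonneg[OF iterate_in[OF x] iterate_in[OF x]] by (simp add: b_def)
  obtain L where L: "b \<longlonglongrightarrow> L" "\<And>n. L \<le> b n"
    using decseq_convergent[of b] decreasing nonneg
    by (metis decseq_SucI less_imp_le)
  have "L = 0"
  proof (rule ccontr)
    assume "L \<noteq> 0"
    moreover have "0 \<le> L" using LIMSEQ_le_const[OF L(1)] nonneg by blast
    ultimately have "L > 0" by simp
    then obtain \<delta> where "\<delta> > 0"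
      and \<delta>: "\<forall>y\<in>X. \<forall>y'\<in>X. d y y' < \<delta> + L \<longrightarrow> d (T y) (T y') \<le> L"
      using ciric_matkowski_delta by blast
    obtain N where "b N < L + \<delta>"
      using order_tendstoD(2)[OF L(1), of "L + \<delta>"] \<open>\<delta> > 0\<close>
      by (auto simp: eventually_sequentially)
    then have "b (Suc N) \<le> L"
      using \<delta> iterate_in[OF x] by (simp add: b_def add.commute)
    then show False using L(2)[of "Suc (Suc N)"] decreasing[of "Suc N"] by linarith
  qed
  then show ?thesis using L(1) unfolding b_def by simp
qed

lemma orbit_dist_bound:
  assumes x: "x \<in> X" and inj: "inj (\<lambda>n. (T ^^ n) x)" and "0 < e"
    and contract: "\<And>y y'. y \<in> X \<Longrightarrow> y' \<in> X \<Longrightarrow> d y y' < \<delta> + e \<Longrightarrow> d (T y) (T y') \<le> e"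
    and steps: "\<And>n. N \<le> n \<Longrightarrow> d ((T ^^ n) x) ((T ^^ Suc n) x) < \<delta> / \<nu>"
    and near: "\<And>n j. N \<le> n \<Longrightarrow> 1 \<le> j \<Longrightarrow> j \<le> \<nu> \<Longrightarrow> d ((T ^^ n) x) ((T ^^ (n + j)) x) < \<delta>"
    and "N \<le> n" "n < m"
  shows "d ((T ^^ n) x) ((T ^^ m) x) < e + \<delta>"
  using \<open>n < m\<close>
proof (induction m rule: less_induct)
  case (less m)
  show ?case
  proof (cases "m \<le> n + \<nu>")
    case True
    then have "1 \<le> m - n" "m - n \<le> \<nu>" "n + (m - n) = m" using less.prems by auto
    then show ?thesis using near[OF \<open>N \<le> n\<close>, of "m - n"] \<open>0 < e\<close> by simp
  next
    case False
    define k where "k = m - \<nu>"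
    have k: "n < k" "k < m" "m = k + \<nu>" using False nu_pos by (auto simp: k_def)
    have "d ((T ^^ n) x) ((T ^^ k) x) < \<delta> + e"
      using less.IH[OF k(2) k(1)] by simp
    then have middle: "d ((T ^^ Suc n) x) ((T ^^ Suc k) x) \<le> e"
      using contract iterate_in[OF x] by simp
    have "(\<Sum>i<\<nu> - 1. d ((T ^^ (Suc k + i)) x) ((T ^^ Suc (Suc k + i)) x))
        \<le> of_nat (card {..<\<nu> - 1}) * (\<delta> / \<nu>)"
      by (rule sum_bounded_above, rule less_imp_le, rule steps) (use k(1) \<open>N \<le> n\<close> in simp)
    then have tail: "(\<Sum>i<\<nu> - 1. d ((T ^^ (Suc k + i)) x) ((T ^^ Suc (Suc k + i)) x))
        \<le> (real \<nu> - 1) * (\<delta> / \<nu>)"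
      using nu_pos by (simp add: of_nat_diff)
    have "d ((T ^^ n) x) ((T ^^ m) x) \<le> d ((T ^^ n) x) ((T ^^ Suc n) x)
        + d ((T ^^ Suc n) x) ((T ^^ Suc k) x)
        + (\<Sum>i<\<nu> - 1. d ((T ^^ (Suc k + i)) x) ((T ^^ Suc (Suc k + i)) x))"
      using polygon_inequality_seq[OF inj _ k(1)] iterate_in[OF x] k(3) by auto
    also have "\<dots> < \<delta> / \<nu> + e + (real \<nu> - 1) * (\<delta> / \<nu>)"
      using steps[OF \<open>N \<le> n\<close>] middle tail by linarith
    also have "\<dots> = e + \<delta>"
      using nu_pos by (simp add: field_simps)
    finally show ?thesis .
  qed
qed

lemma orbit_cauchy:
  assumes x: "x \<in> X" and inj: "inj (\<lambda>n. (T ^^ n) x)"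
  shows "gm_cauchy d (\<lambda>n. (T ^^ n) x)"
proof (rule gm_cauchyI)
  show "0 \<le> d ((T ^^ n) x) ((T ^^ m) x)" for n m
    using dist_nonneg iterate_in[OF x] by simp
  fix \<epsilon> :: real
  assume "0 < \<epsilon>"
  define e where "e = \<epsilon> / 2"
  have "0 < e" using \<open>0 < \<epsilon>\<close> by (simp add: e_def)
  then obtain \<delta>\<^sub>0 where "0 < \<delta>\<^sub>0"
    and \<delta>\<^sub>0: "\<forall>y\<in>X. \<forall>y'\<in>X. d y y' < \<delta>\<^sub>0 + e \<longrightarrow> d (T y) (T y') \<le> e"
    using ciric_matkowski_delta by blast
  define \<delta> where "\<delta> = min \<delta>\<^sub>0 e"
  have "0 < \<delta>" using \<open>0 < \<delta>\<^sub>0\<close> \<open>0 < e\<close> by (simp add: \<delta>_def)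
  have contract: "d (T y) (T y') \<le> e" if "y \<in> X" "y' \<in> X" "d y y' < \<delta> + e" for y y'
    using \<delta>\<^sub>0 that by (force simp: \<delta>_def)
  have "\<forall>\<^sub>F n in sequentially. d ((T ^^ n) x) ((T ^^ Suc n) x) < \<delta> / \<nu>"
    (is "eventually ?step _")
    using order_tendstoD(2)[OF orbit_dist_tendsto_0[OF x inj, of 1]] \<open>0 < \<delta>\<close> nu_pos by simp
  moreover have "\<forall>\<^sub>F n in sequentially. \<forall>j\<in>{1..\<nu>}. d ((T ^^ n) x) ((T ^^ (n + j)) x) < \<delta>"
    (is "eventually ?near _")
    using order_tendstoD(2)[OF orbit_dist_tendsto_0[OF x inj] \<open>0 < \<delta>\<close>]
    by (intro eventually_ball_finite) auto
  ultimately have "\<forall>\<^sub>F n in sequentially. ?step n \<and> ?near n"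
    by (rule eventually_conj)
  then obtain N where N: "\<And>n. N \<le> n \<Longrightarrow> ?step n \<and> ?near n"
    unfolding eventually_sequentially by blast
  have "d ((T ^^ n) x) ((T ^^ m) x) < e + \<delta>" if "N \<le> n" "n < m" for n m
    by (rule orbit_dist_bound[OF x inj \<open>0 < e\<close> contract _ _ that]) (use N in auto)
  moreover have "e + \<delta> \<le> \<epsilon>" by (simp add: \<delta>_def e_def)
  ultimately show "\<exists>N. \<forall>n\<ge>N. \<forall>m>n. d ((T ^^ n) x) ((T ^^ m) x) < \<epsilon>"
    by force
qed

lemma orbit_converges_strong_to_fixed_point:
  assumes complete: "gm_complete X d" and x: "x \<in> X"
  shows "\<exists>z\<in>X. T z = z \<and> gm_converges_strong d (\<lambda>n. (T ^^ n) x) z"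
proof (cases "\<exists>n. T ((T ^^ n) x) = (T ^^ n) x")
  case True
  then obtain n where fixed: "T ((T ^^ n) x) = (T ^^ n) x" by blast
  define z where "z = (T ^^ n) x"
  have "z \<in> X" using iterate_in[OF x] by (simp add: z_def)
  have "(T ^^ (n + k)) x = z" for k
    by (induction k) (simp_all add: fixed z_def)
  then have eventually_z: "(T ^^ m) x = z" if "n \<le> m" for m
    using that by (metis le_add_diff_inverse)
  have "gm_cauchy d (\<lambda>n. (T ^^ n) x)"
  proof (rule gm_cauchyI)
    show "0 \<le> d ((T ^^ k) x) ((T ^^ m) x)" for k m
      using dist_nonneg iterate_in[OF x] by simp
    show "\<exists>N. \<forall>k\<ge>N. \<forall>m>k. d ((T ^^ k) x) ((T ^^ m) x) < \<epsilon>" if "0 < \<epsilon>" for \<epsilon>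
      using that eventually_z dist_self[OF \<open>z \<in> X\<close>] by (intro exI[of _ n]) auto
  qed
  moreover have "gm_converges d (\<lambda>n. (T ^^ n) x) z"
    unfolding gm_converges_def
    using eventually_z dist_self[OF \<open>z \<in> X\<close>]
    by (intro tendsto_eventually) (auto simp: eventually_sequentially)
  ultimately show ?thesis
    using \<open>z \<in> X\<close> fixed by (auto simp: gm_converges_strong_def z_def)
next
  case False
  then have inj: "inj (\<lambda>n. (T ^^ n) x)" using inj_orbit[OF x] by blast
  have orbit: "range (\<lambda>n. (T ^^ n) x) \<subseteq> X" using iterate_in[OF x] by auto
  have cauchy: "gm_cauchy d (\<lambda>n. (T ^^ n) x)" by (rule orbit_cauchy[OF x inj])
  then obtain z where "z \<in> X" and conv: "gm_converges d (\<lambda>n. (T ^^ n) x) z"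
    using complete orbit unfolding gm_complete_def by blast
  from conv have z: "(\<lambda>n. d z ((T ^^ n) x)) \<longlonglongrightarrow> 0" unfolding gm_converges_def .
  have "T z \<in> X" using maps_into \<open>z \<in> X\<close> by blast
  have "(\<lambda>n. d (T z) ((T ^^ Suc n) x)) \<longlonglongrightarrow> 0"
  proof (rule tendsto_sandwich[OF _ _ tendsto_const z])
    show "\<forall>\<^sub>F n in sequentially. 0 \<le> d (T z) ((T ^^ Suc n) x)"
      using dist_nonneg[OF \<open>T z \<in> X\<close> iterate_in[OF x, of "Suc _"]] by simp
    show "\<forall>\<^sub>F n in sequentially. d (T z) ((T ^^ Suc n) x) \<le> d z ((T ^^ n) x)"
      using dist_image_le[OF \<open>z \<in> X\<close> iterate_in[OF x]] by simp
  qed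
  then have Tz: "(\<lambda>n. d (T z) ((T ^^ n) x)) \<longlonglongrightarrow> 0"
    by (rule LIMSEQ_imp_Suc)
  have steps: "(\<lambda>n. d ((T ^^ n) x) ((T ^^ Suc n) x)) \<longlonglongrightarrow> 0"
    using orbit_dist_tendsto_0[OF x inj, of 1] by simp
  have "T z = z"
    using limit_unique_injective[OF inj orbit steps \<open>T z \<in> X\<close> Tz \<open>z \<in> X\<close> z] .
  then show ?thesis
    using \<open>z \<in> X\<close> cauchy conv by (auto simp: gm_converges_strong_def)
qed

end

theorem corollary3p4:
  fixes \<nu> :: nat and X :: "'a set" and d :: "'a \<Rightarrow> 'a \<Rightarrow> real" and T :: "'a \<Rightarrow> 'a"
  assumes "\<nu> \<ge> 1"
    and "nu_gen_metric \<nu> X d"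
    and "gm_complete X d"
    and "T ` X \<subseteq> X"
    and "ciric_matkowski X d T"
  shows "\<exists>z\<in>X. T z = z \<and> (\<forall>w\<in>X. T w = w \<longrightarrow> w = z) \<and>
           (\<forall>x\<in>X. gm_converges_strong d (\<lambda>n. (T ^^ n) x) z)"
proof -
  interpret ciric_matkowski_contraction \<nu> X d T
    using assms by unfold_locales
  obtain x\<^sub>0 where "x\<^sub>0 \<in> X" using nonempty by blast
  then obtain z where z: "z \<in> X" "T z = z"
    using orbit_converges_strong_to_fixed_point[OF assms(3)] by blast
  moreover have "w = z" if "w \<in> X" "T w = w" for w
    using fixed_point_unique z that by blast
  moreover have "gm_converges_strong d (\<lambda>n. (T ^^ n) x) z" if "x \<in> X" for x
    using orbit_converges_strong_to_fixed_point[OF assms(3) that] fixed_point_unique z by blast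
  ultimately show ?thesis by blast
qed

end
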